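(* Let $G$ be a finite non-abelian group such that $G/Z(G)\cong \mathbb{Z}_p\times\mathbb{Z}_p$ for a prime $p$. Put $z=|Z(G)|$ and $n=\frac{(p-1)z}{p}$. Then $\mathrm{Spec}(\Gamma_G)=\{[0]^{(p+1)(n-1)},[-n]^{p},[np]^1\}$, $\mathrm{L\text{-}Spec}(\Gamma_G)=\{[0]^1,[np]^{(p+1)(n-1)},[(p+1)n]^{p}\}$, $\mathrm{Q\text{-}Spec}(\Gamma_G)=\{[np]^{(p+1)(n-1)},[n(p-1)]^{p},[2np]^1\}$, and $E(\Gamma_G)=LE(\Gamma_G)=SE(\Gamma_G)=2np$.
   Context: For a finite non-abelian group $G$ with center $Z(G)$ and $x\in G$, $x^G$ is the conjugacy class of $x$. The non-commuting conjugacy class graph (NCCC-graph) $\Gamma_G$ is the simple undirected graph with vertex set $\{x^G: x\in G\setminus Z(G)\}$, in which distinct vertices $x^G,y^G$ are adjacent iff $x'y'\neq y'x'$ for all $x'\in x^G$, $y'\in y^G$. For a simple graph $\mathcal G$ with adjacency matrix $A$ and diagonal degree matrix $D$, let $L=D-A$ and $Q=D+A$; $\mathrm{Spec}$, $\mathrm{L\text{-}Spec}$, $\mathrm{Q\text{-}Spec}$ denote the multisets of eigenvalues of $A$, $L$, $Q$, written $\{[\lambda_1]^{k_1},\dots\}$ where $[\lambda]^k$ means eigenvalue $\lambda$ of multiplicity $k$ (a term with multiplicity $0$ is absent). $E(\mathcal G)=\sum_{\lambda\in\mathrm{Spec}}|\lambda|$; with $\Delta(\mathcal G)=2|E(\mathcal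 G)|/|V(\mathcal G)|$ (twice the number of edges over the number of vertices), $LE(\mathcal G)=\sum_{\beta\in \mathrm{L\text{-}Spec}}|\beta-\Delta(\mathcal G)|$ and $SE(\mathcal G)=\sum_{\gamma\in\mathrm{Q\text{-}Spec}}|\gamma-\Delta(\mathcal G)|$ (sums with multiplicity). *)

theory Defs
  imports "HOL-Algebra.Algebra" "Jordan_Normal_Form.Char_Poly"
begin

definition grp_center :: "('a, 'b) monoid_scheme \<Rightarrow> 'a set" where
  "grp_center G = {z \<in> carrier G. \<forall>g \<in> carrier G. z \<otimes>\<^bsub>G\<^esub> g = g \<otimes>\<^bsub>G\<^esub> z}"

definition conj_class :: "('a, 'b) monoid_scheme \<Rightarrow> 'a \<Rightarrow> 'a set" where
  "conj_class G x = {g \<otimes>\<^bsub>G\<^esub> x \<otimes>\<^bsub>G\<^esub> inv\<^bsub>G\<^esub> g | g. g \<in> carrier G}"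

definition nccc_vertices :: "('a, 'b) monoid_scheme \<Rightarrow> 'a set set" where
  "nccc_vertices G = conj_class G ` (carrier G - grp_center G)"

definition nccc_adj :: "('a, 'b) monoid_scheme \<Rightarrow> 'a set \<Rightarrow> 'a set \<Rightarrow> bool" where
  "nccc_adj G V W \<longleftrightarrow> V \<noteq> W \<and>
     (\<forall>x \<in> V. \<forall>y \<in> W. x \<otimes>\<^bsub>G\<^esub> y \<noteq> y \<otimes>\<^bsub>G\<^esub> x)"

text \<open>A fixed enumeration of the vertices (the spectra do not depend on the choice).\<close>
definition nccc_vlist :: "('a, 'b) monoid_scheme \<Rightarrow> 'a set list" where
  "nccc_vlist G = (SOME vs. distinct vs \<and> set vs = nccc_vertices G)"

definition nccc_adj_mat :: "('a, 'b) monoid_scheme \<Rightarrow> real mat" where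
  "nccc_adj_mat G = (let vs = nccc_vlist G in
     mat (length vs) (length vs)
       (\<lambda>(i, j). if nccc_adj G (vs ! i) (vs ! j) then 1 else 0))"

definition nccc_deg_mat :: "('a, 'b) monoid_scheme \<Rightarrow> real mat" where
  "nccc_deg_mat G = (let A = nccc_adj_mat G in
     mat (dim_row A) (dim_row A)
       (\<lambda>(i, j). if i = j then (\<Sum>k < dim_row A. A $$ (i, k)) else 0))"

definition nccc_lap_mat :: "('a, 'b) monoid_scheme \<Rightarrow> real mat" where
  "nccc_lap_mat G = nccc_deg_mat G - nccc_adj_mat G"

definition nccc_slap_mat :: "('a, 'b) monoid_scheme \<Rightarrow> real mat" where
  "nccc_slap_mat G = nccc_deg_mat G + nccc_adj_mat G"

text \<open>Spectrum: the multiset of eigenvalues (with algebraic multiplicity), i.e. the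
  multiset of roots of the characteristic polynomial (which splits for real symmetric matrices).\<close>
definition spec :: "real mat \<Rightarrow> real multiset" where
  "spec A = (THE M. char_poly A = (\<Prod>a \<in># M. [:- a, 1:]))"

text \<open>Number of edges counted twice = sum of degrees = sum of adjacency entries.\<close>
definition nccc_avg_deg :: "('a, 'b) monoid_scheme \<Rightarrow> real" where
  "nccc_avg_deg G = (let A = nccc_adj_mat G in
     (\<Sum>i < dim_row A. \<Sum>j < dim_row A. A $$ (i, j)) / real (card (nccc_vertices G)))"

definition energy :: "('a, 'b) monoid_scheme \<Rightarrow> real" where
  "energy G = (\<Sum>l \<in># spec (nccc_adj_mat G). \<bar>l\<bar>)"

definition lap_energy :: "('a, 'b) monoid_scheme \<Rightarrow> real" where
  "lap_energy G = (\<Sum>\<beta> \<in># spec (nccc_lap_mat G). \<bar>\<beta> - nccc_avg_deg G\<bar>)"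

definition slap_energy :: "('a, 'b) monoid_scheme \<Rightarrow> real" where
  "slap_energy G = (\<Sum>\<gamma> \<in># spec (nccc_slap_mat G). \<bar>\<gamma> - nccc_avg_deg G\<bar>)"

end

theory Submission
  imports Defs "Jordan_Normal_Form.Schur_Decomposition"
begin

(*
  Write Z for the centre. For non-central x the centralizer C(x) lies strictly between Z and G,
  so |C(x)| = p |Z|, and the only subgroup strictly between Z and C(x) is C(x) itself; hence
  commuting non-central elements have the same centralizer. As G/Z is abelian, every conjugate
  of x lies in the coset Z x, so the class of x has p elements, all with centralizer C(x).
  Therefore two classes are adjacent in the NCCC-graph exactly when their centralizers differ:
  the graph is complete multipartite, each part consisting of the n = (p - 1) |Z| / p classes
  contained in some C(x) - Z, and counting gives p + 1 parts. Its adjacency matrix K satisfies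
  K^2 = p n J - n K and K J = p n J, which confines the spectrum to {0, -n, p n}; the traces of
  K and K^2 fix the multiplicities. The graph is p n-regular, so its Laplacian and signless
  Laplacian are p n I - K and p n I + K.
*)

section \<open>Traces and spectra\<close>

definition mat_trace :: "'a::comm_ring_1 mat \<Rightarrow> 'a" where
  "mat_trace A = (\<Sum>i\<in>{0..<dim_row A}. A $$ (i, i))"

lemma mat_trace_mult_comm:
  assumes "A \<in> carrier_mat n m" "B \<in> carrier_mat m n"
  shows "mat_trace (A * B) = mat_trace (B * A)"
proof -
  have "mat_trace (A * B) = (\<Sum>i\<in>{0..<n}. \<Sum>k\<in>{0..<m}. A $$ (i, k) * B $$ (k, i))"
    using assms by (simp add: mat_trace_def scalar_prod_def)
  also have "\<dots> = (\<Sum>k\<in>{0..<m}. \<Sum>i\<in>{0..<n}. B $$ (k, i) * A $$ (i, k))"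
    by (subst sum.swap) (simp add: mult.commute)
  also have "\<dots> = mat_trace (B * A)"
    using assms by (simp add: mat_trace_def scalar_prod_def)
  finally show ?thesis .
qed

lemma mat_trace_similar:
  assumes "similar_mat_wit A B P Q"
  shows "mat_trace A = mat_trace B"
proof -
  from similar_mat_witD[OF refl assms] obtain n where
    carrier: "A \<in> carrier_mat n n" "B \<in> carrier_mat n n" "P \<in> carrier_mat n n" "Q \<in> carrier_mat n n"
    and QP: "Q * P = 1\<^sub>m n" and A: "A = P * B * Q"
    by blast
  have "mat_trace A = mat_trace (Q * (P * B))"
    unfolding A using carrier by (intro mat_trace_mult_comm[of _ n n]) auto
  also have "Q * (P * B) = B"
    using carrier QP by (simp add: assoc_mult_mat[symmetric])
  finally show ?thesis .
qed

lemma upper_triangular_mult_diag: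
  assumes A: "A \<in> carrier_mat n n" "upper_triangular A"
    and B: "B \<in> carrier_mat n n" "upper_triangular B"
    and i: "i < n"
  shows "(A * B) $$ (i, i) = A $$ (i, i) * B $$ (i, i)"
proof -
  have "(A * B) $$ (i, i) = (\<Sum>k\<in>{0..<n}. A $$ (i, k) * B $$ (k, i))"
    using A B i by (simp add: scalar_prod_def)
  also have "\<dots> = (\<Sum>k\<in>{0..<n}. if k = i then A $$ (i, i) * B $$ (i, i) else 0)"
    using A B i
    by (intro sum.cong) (auto simp: linorder_neq_iff upper_triangularD[OF A(2)] upper_triangularD[OF B(2)])
  finally show ?thesis
    using i by simp
qed

lemma mat_trace_upper_triangular:
  assumes "B \<in> carrier_mat n n" "upper_triangular B"
  shows "mat_trace B = sum_list (diag_mat B)"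
    and "mat_trace (B * B) = (\<Sum>a\<leftarrow>diag_mat B. a\<^sup>2)"
proof -
  show "mat_trace B = sum_list (diag_mat B)"
    using assms by (simp add: mat_trace_def diag_mat_def sum_set_upt_conv_sum_list_nat[symmetric])
  have "mat_trace (B * B) = (\<Sum>i\<in>{0..<n}. (B * B) $$ (i, i))"
    unfolding mat_trace_def using assms by (simp only: index_mult_mat(2) carrier_matD(1))
  also have "\<dots> = (\<Sum>i\<in>{0..<n}. (B $$ (i, i))\<^sup>2)"
    by (rule sum.cong[OF refl]) (use assms in \<open>simp add: upper_triangular_mult_diag power2_eq_square del: index_mult_mat\<close>)
  finally show "mat_trace (B * B) = (\<Sum>a\<leftarrow>diag_mat B. a\<^sup>2)"
    using assms by (simp add: diag_mat_def sum_set_upt_conv_sum_list_nat[symmetric] o_def)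
qed

lemma schur_triangularization:
  fixes K :: "complex mat"
  assumes K: "K \<in> carrier_mat n n" and cp: "char_poly K = (\<Prod>a\<leftarrow>es. [:-a, 1:])"
  obtains B P Q where "similar_mat_wit K B P Q" and "upper_triangular B" and "diag_mat B = es"
    and "B \<in> carrier_mat n n"
proof -
  obtain B P Q where "schur_decomposition K es = (B, P, Q)"
    by (cases "schur_decomposition K es") auto
  from schur_decomposition[OF K cp this] have "similar_mat_wit K B P Q"
    and "upper_triangular B" and "diag_mat B = es"
    by auto
  with similar_mat_witD2[OF K] that show ?thesis
    by blast
qed

lemma mat_trace_eq_sum_eigenvalues:
  fixes K :: "complex mat"
  assumes K: "K \<in> carrier_mat n n" and cp: "char_poly K = (\<Prod>a\<leftarrow>es. [:-a, 1:])"
  shows "mat_trace K = sum_list es"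
    and "mat_trace (K * K) = (\<Sum>a\<leftarrow>es. a\<^sup>2)"
proof -
  obtain B P Q where sim: "similar_mat_wit K B P Q" and ut: "upper_triangular B"
    and diag: "diag_mat B = es" and B: "B \<in> carrier_mat n n"
    using schur_triangularization[OF K cp] .
  have "similar_mat_wit (K * K) (B * B) P Q"
    using similar_mat_wit_pow[OF sim, of 2] K B by (simp add: numeral_2_eq_2)
  then show "mat_trace (K * K) = (\<Sum>a\<leftarrow>es. a\<^sup>2)"
    using mat_trace_similar mat_trace_upper_triangular(2)[OF B ut] diag by metis
  show "mat_trace K = sum_list es"
    using mat_trace_similar[OF sim] mat_trace_upper_triangular(1)[OF B ut] diag by simp
qed

lemma similar_mat_wit_add_scalar:
  fixes A :: "'a::comm_ring_1 mat"
  assumes "A \<in> carrier_mat n n" "similar_mat_wit A B P Q"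
  shows "similar_mat_wit (s \<cdot>\<^sub>m 1\<^sub>m n + A) (s \<cdot>\<^sub>m 1\<^sub>m n + B) P Q"
proof -
  from similar_mat_witD2[OF assms] have carrier: "B \<in> carrier_mat n n" "P \<in> carrier_mat n n" "Q \<in> carrier_mat n n"
    and PQ: "P * Q = 1\<^sub>m n" "Q * P = 1\<^sub>m n" and A: "A = P * B * Q"
    by auto
  have "P * (s \<cdot>\<^sub>m 1\<^sub>m n + B) = s \<cdot>\<^sub>m P + P * B"
    using carrier by (simp add: mult_add_distrib_mat[of P n n _ n] mult_smult_distrib[of P n n _ n])
  then have "P * (s \<cdot>\<^sub>m 1\<^sub>m n + B) * Q = s \<cdot>\<^sub>m P * Q + P * B * Q"
    using carrier by (simp add: add_mult_distrib_mat[of _ n n])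
  also have "\<dots> = s \<cdot>\<^sub>m 1\<^sub>m n + A"
    using carrier PQ A by (simp add: mult_smult_assoc_mat[of P n n Q n])
  finally show ?thesis
    using PQ carrier assms(1) by (intro similar_mat_witI[of _ _ n]) auto
qed

lemma char_poly_affine:
  fixes K :: "complex mat"
  assumes K: "K \<in> carrier_mat n n" and cp: "char_poly K = (\<Prod>a\<leftarrow>es. [:-a, 1:])"
  shows "char_poly (s \<cdot>\<^sub>m 1\<^sub>m n + t \<cdot>\<^sub>m K) = (\<Prod>a\<leftarrow>es. [:-(s + t * a), 1:])"
proof -
  obtain B P Q where sim: "similar_mat_wit K B P Q" and ut: "upper_triangular B"
    and diag: "diag_mat B = es" and B: "B \<in> carrier_mat n n"
    using schur_triangularization[OF K cp] .
  have "similar_mat (s \<cdot>\<^sub>m 1\<^sub>m n + t \<cdot>\<^sub>m K) (s \<cdot>\<^sub>m 1\<^sub>m n + t \<cdot>\<^sub>m B)"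
    using similar_mat_wit_add_scalar[OF smult_carrier_mat[OF K] similar_mat_wit_smult[OF sim]]
    unfolding similar_mat_def by blast
  then have "char_poly (s \<cdot>\<^sub>m 1\<^sub>m n + t \<cdot>\<^sub>m K) = char_poly (s \<cdot>\<^sub>m 1\<^sub>m n + t \<cdot>\<^sub>m B)"
    by (rule char_poly_similar)
  also have "\<dots> = (\<Prod>a\<leftarrow>diag_mat (s \<cdot>\<^sub>m 1\<^sub>m n + t \<cdot>\<^sub>m B). [:-a, 1:])"
  proof (rule char_poly_upper_triangular[of _ n])
    show "upper_triangular (s \<cdot>\<^sub>m 1\<^sub>m n + t \<cdot>\<^sub>m B)"
      using B by (intro upper_triangularI) (simp add: upper_triangularD[OF ut])
  qed (intro add_carrier_mat smult_carrier_mat one_carrier_mat B)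
  also have "diag_mat (s \<cdot>\<^sub>m 1\<^sub>m n + t \<cdot>\<^sub>m B) = map (\<lambda>a. s + t * a) es"
    using B diag unfolding diag_mat_def by auto
  finally show ?thesis
    by (simp add: o_def)
qed

lemma spec_eqI:
  assumes "char_poly A = (\<Prod>a\<in>#M. [:-a, 1:])"
  shows "spec A = M"
proof -
  have roots: "proots (\<Prod>a\<in>#N. [:-a, 1:]) = N" for N :: "real multiset"
  proof (induction N)
    case (add x N)
    have "(\<Prod>a\<in>#N. [:-a, 1:]) \<noteq> 0"
      by (auto simp: prod_mset_zero_iff)
    then have "proots ([:-x, 1:] * (\<Prod>a\<in>#N. [:-a, 1:])) = {#x#} + N"
      using add by (subst proots_mult) auto
    then show ?case
      by simp
  qed simp
  show ?thesis
    unfolding spec_def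
    by (rule the_equality) (use assms roots in metis)+
qed

lemma mset_eq_replicate_counts:
  assumes "set_mset M \<subseteq> {a, b, c}" "a \<noteq> b" "a \<noteq> c" "b \<noteq> c"
  shows "M = replicate_mset (count M a) a + replicate_mset (count M b) b + replicate_mset (count M c) c"
proof (rule multiset_eqI)
  fix x
  show "count M x = count (replicate_mset (count M a) a + replicate_mset (count M b) b
      + replicate_mset (count M c) c) x"
    using assms by (cases "x \<in> {a, b, c}") (auto simp: count_eq_zero_iff)
qed

lemma smult_mult_mat_vec:
  assumes "A \<in> carrier_mat nr nc" "v \<in> carrier_vec nc"
  shows "(k \<cdot>\<^sub>m A) *\<^sub>v v = k \<cdot>\<^sub>v (A *\<^sub>v (v :: 'a::comm_ring_1 vec))"
  using assms by (intro eq_vecI) (auto simp: scalar_prod_def sum_distrib_left ac_simps)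

lemma char_poly_of_complex_char_poly:
  fixes R :: "real mat"
  assumes R: "R \<in> carrier_mat n n"
    and cp: "char_poly (map_mat complex_of_real R) = (\<Prod>a\<leftarrow>es. [:-a, 1:])"
    and es: "mset es = image_mset complex_of_real M"
  shows "char_poly R = (\<Prod>a\<in>#M. [:-a, 1:])"
proof -
  interpret of_real: map_poly_inj_comm_ring_hom complex_of_real ..
  have "(\<Prod>a\<leftarrow>es. [:-a, 1:]) = (\<Prod>a\<in>#mset es. [:-a, 1:])"
    by (metis mset_map prod_mset_prod_list)
  then have "map_poly complex_of_real (char_poly R) = (\<Prod>a\<in>#mset es. [:-a, 1:])"
    using cp of_real_hom.char_poly_hom[OF R] by metis
  also have "\<dots> = map_poly complex_of_real (\<Prod>a\<in>#M. [:-a, 1:])"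
    unfolding es by (simp add: of_real.hom_prod_mset image_mset.compositionality o_def)
  finally show ?thesis
    by (rule of_real.injectivity)
qed

lemma spec_affine:
  fixes R :: "real mat"
  assumes R: "R \<in> carrier_mat n n" and cp: "char_poly R = (\<Prod>a\<in>#M. [:-a, 1:])"
  shows "spec (s \<cdot>\<^sub>m 1\<^sub>m n + t \<cdot>\<^sub>m R) = image_mset (\<lambda>a. s + t * a) M"
proof -
  interpret of_real: map_poly_inj_comm_ring_hom complex_of_real ..
  obtain xs where M: "M = mset xs"
    using ex_mset by metis
  have "char_poly (map_mat complex_of_real R) = map_poly complex_of_real (\<Prod>a\<in>#M. [:-a, 1:])"
    using of_real_hom.char_poly_hom[OF R] cp by metis
  also have "\<dots> = (\<Prod>a\<in>#mset (map complex_of_real xs). [:-a, 1:])"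
    by (simp add: M of_real.hom_prod_mset image_mset.compositionality o_def)
  also have "\<dots> = (\<Prod>a\<leftarrow>map complex_of_real xs. [:-a, 1:])"
    by (metis mset_map prod_mset_prod_list)
  finally have "char_poly (complex_of_real s \<cdot>\<^sub>m 1\<^sub>m n + complex_of_real t \<cdot>\<^sub>m map_mat complex_of_real R)
      = (\<Prod>a\<leftarrow>map complex_of_real xs. [:-(complex_of_real s + complex_of_real t * a), 1:])"
    using R by (intro char_poly_affine) auto
  moreover have "map_mat complex_of_real (s \<cdot>\<^sub>m 1\<^sub>m n + t \<cdot>\<^sub>m R)
      = complex_of_real s \<cdot>\<^sub>m 1\<^sub>m n + complex_of_real t \<cdot>\<^sub>m map_mat complex_of_real R"
    using R by (intro eq_matI) auto
  ultimately have "char_poly (map_mat complex_of_real (s \<cdot>\<^sub>m 1\<^sub>m n + t \<cdot>\<^sub>m R))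
      = (\<Prod>a\<leftarrow>map (\<lambda>a. complex_of_real (s + t * a)) xs. [:-a, 1:])"
    by (simp add: o_def)
  then have "char_poly (s \<cdot>\<^sub>m 1\<^sub>m n + t \<cdot>\<^sub>m R) = (\<Prod>a\<in>#image_mset (\<lambda>a. s + t * a) M. [:-a, 1:])"
    by (rule char_poly_of_complex_char_poly[where n = n, rotated])
      (use R in \<open>simp_all add: M image_mset.compositionality o_def\<close>)
  then show ?thesis
    by (rule spec_eqI)
qed

section \<open>Complete multipartite graphs\<close>

definition multipartite_mat :: "nat \<Rightarrow> (nat \<Rightarrow> 'b) \<Rightarrow> 'a::zero_neq_one mat" where
  "multipartite_mat m c = mat m m (\<lambda>(i, j). of_bool (c i \<noteq> c j))"

definition ones_mat :: "nat \<Rightarrow> 'a::one mat" where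
  "ones_mat m = mat m m (\<lambda>_. 1)"

lemma multipartite_mat_carrier [simp]:
  "multipartite_mat m c \<in> carrier_mat m m"
  "dim_row (multipartite_mat m c) = m" "dim_col (multipartite_mat m c) = m"
  by (simp_all add: multipartite_mat_def)

lemma ones_mat_carrier [simp]:
  "ones_mat m \<in> carrier_mat m m" "dim_row (ones_mat m) = m" "dim_col (ones_mat m) = m"
  by (simp_all add: ones_mat_def)

lemma sum_of_bool_atLeastLessThan:
  fixes m :: nat
  shows "(\<Sum>k\<in>{0..<m}. of_bool (P k)) = (of_nat (card {k \<in> {0..<m}. P k}) :: 'a::comm_semiring_1)"
  by (simp add: Int_def)

locale complete_multipartite =
  fixes m n p :: nat and c :: "nat \<Rightarrow> 'b"
  assumes card_vertices: "m = (p + 1) * n"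
    and n_pos: "0 < n" and p_pos: "0 < p"
    and card_part: "\<And>i. i < m \<Longrightarrow> card {k \<in> {0..<m}. c k = c i} = n"
begin

lemma card_other_parts:
  assumes "i < m"
  shows "card {k \<in> {0..<m}. c i \<noteq> c k} = p * n"
proof -
  have "{k \<in> {0..<m}. c i \<noteq> c k} = {0..<m} - {k \<in> {0..<m}. c k = c i}"
    by auto
  also have "card \<dots> = m - n"
    using card_part[OF assms] by (subst card_Diff_subset) auto
  finally show ?thesis
    using card_vertices by simp
qed

lemma card_outside_two_parts:
  assumes "i < m" "j < m" "c i \<noteq> c j"
  shows "card {k \<in> {0..<m}. c i \<noteq> c k \<and> c k \<noteq> c j} = p * n - n"
proof -
  have "{k \<in> {0..<m}. c i \<noteq> c k \<and> c k \<noteq> c j} = {k \<in> {0..<m}. c i \<noteq> c k} - {k \<in> {0..<m}. c k = c j}"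
    by auto
  moreover have "{k \<in> {0..<m}. c k = c j} \<subseteq> {k \<in> {0..<m}. c i \<noteq> c k}"
    using assms(3) by auto
  ultimately show ?thesis
    using card_other_parts[OF assms(1)] card_part[OF assms(2)]
    by (simp only:) (subst card_Diff_subset; auto)
qed

lemma multipartite_mat_row_sum:
  assumes "i < m"
  shows "(\<Sum>k<m. (multipartite_mat m c :: 'a::comm_semiring_1 mat) $$ (i, k)) = of_nat (p * n)"
proof -
  have "(\<Sum>k<m. (multipartite_mat m c :: 'a mat) $$ (i, k)) = (\<Sum>k\<in>{0..<m}. of_bool (c i \<noteq> c k))"
    using assms by (simp add: multipartite_mat_def atLeast0LessThan)
  also have "\<dots> = of_nat (card {k \<in> {0..<m}. c i \<noteq> c k})"
    by (rule sum_of_bool_atLeastLessThan)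
  finally show ?thesis
    using card_other_parts[OF assms] by simp
qed

lemma multipartite_mat_square:
  "(multipartite_mat m c * multipartite_mat m c :: 'a::comm_ring_1 mat)
     = of_nat (p * n) \<cdot>\<^sub>m ones_mat m - of_nat n \<cdot>\<^sub>m multipartite_mat m c"
proof (rule eq_matI)
  fix i j
  assume "i < dim_row (of_nat (p * n) \<cdot>\<^sub>m ones_mat m - of_nat n \<cdot>\<^sub>m (multipartite_mat m c :: 'a mat))"
    and "j < dim_col (of_nat (p * n) \<cdot>\<^sub>m ones_mat m - of_nat n \<cdot>\<^sub>m (multipartite_mat m c :: 'a mat))"
  then have i: "i < m" and j: "j < m"
    by simp_all
  have "(multipartite_mat m c * multipartite_mat m c :: 'a mat) $$ (i, j)
      = (\<Sum>k\<in>{0..<m}. of_bool (c i \<noteq> c k \<and> c k \<noteq> c j))"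
    using i j by (simp add: multipartite_mat_def scalar_prod_def Int_def conj_assoc)
  also have "\<dots> = of_nat (card {k \<in> {0..<m}. c i \<noteq> c k \<and> c k \<noteq> c j})"
    by (rule sum_of_bool_atLeastLessThan)
  also have "\<dots> = (of_nat (p * n) \<cdot>\<^sub>m ones_mat m - of_nat n \<cdot>\<^sub>m (multipartite_mat m c :: 'a mat)) $$ (i, j)"
  proof (cases "c i = c j")
    case True
    then have "{k \<in> {0..<m}. c i \<noteq> c k \<and> c k \<noteq> c j} = {k \<in> {0..<m}. c i \<noteq> c k}"
      by auto
    then show ?thesis
      using True i j card_other_parts[OF i] by (simp add: multipartite_mat_def ones_mat_def)
  next
    case False
    have "n \<le> p * n"
      using p_pos by simp
    with False show ?thesis
      using i j card_outside_two_parts[OF i j False]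
      by (simp add: multipartite_mat_def ones_mat_def of_nat_diff)
  qed
  finally show "(multipartite_mat m c * multipartite_mat m c :: 'a mat) $$ (i, j)
      = (of_nat (p * n) \<cdot>\<^sub>m ones_mat m - of_nat n \<cdot>\<^sub>m (multipartite_mat m c :: 'a mat)) $$ (i, j)" .
qed simp_all

lemma multipartite_mat_mult_ones:
  "(multipartite_mat m c * ones_mat m :: 'a::comm_semiring_1 mat) = of_nat (p * n) \<cdot>\<^sub>m ones_mat m"
proof (rule eq_matI)
  fix i j
  assume "i < dim_row (of_nat (p * n) \<cdot>\<^sub>m ones_mat m :: 'a mat)"
    and "j < dim_col (of_nat (p * n) \<cdot>\<^sub>m ones_mat m :: 'a mat)"
  then have i: "i < m" and j: "j < m"
    by simp_all
  have "(multipartite_mat m c * ones_mat m :: 'a mat) $$ (i, j) = (\<Sum>k<m. multipartite_mat m c $$ (i, k))"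
    using i j by (simp add: scalar_prod_def ones_mat_def atLeast0LessThan)
  then show "(multipartite_mat m c * ones_mat m :: 'a mat) $$ (i, j) = (of_nat (p * n) \<cdot>\<^sub>m ones_mat m :: 'a mat) $$ (i, j)"
    using i j multipartite_mat_row_sum[OF i] by (simp add: ones_mat_def)
qed simp_all

text \<open>With \<open>K = multipartite_mat m c\<close> and \<open>J = ones_mat m\<close>, the identities
  \<open>K\<^sup>2 = p n J - n K\<close> and \<open>K J = p n J\<close> give \<open>K (K\<^sup>2 + n K) = p n (K\<^sup>2 + n K)\<close>,
  so each eigenvalue of \<open>K\<close> is a root of \<open>e (e + n) (e - p n)\<close>.\<close>

lemma multipartite_eigenvector_component:
  fixes e :: "'a::field"
  assumes "eigenvector (multipartite_mat m c) v e" and i: "i < m"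
  shows "e * (e + of_nat n) * (e - of_nat (p * n)) * v $ i = 0"
proof -
  define K J where "K = (multipartite_mat m c :: 'a mat)" and "J = (ones_mat m :: 'a mat)"
  define a b where "a = (of_nat (p * n) :: 'a)" and "b = (of_nat n :: 'a)"
  define f where "f = e * e + b * e"
  have K: "K \<in> carrier_mat m m" and J: "J \<in> carrier_mat m m"
    by (simp_all add: K_def J_def)
  from assms have v: "v \<in> carrier_vec m" and Kv: "K *\<^sub>v v = e \<cdot>\<^sub>v v"
    unfolding eigenvector_def K_def by auto
  have "e \<cdot>\<^sub>v (e \<cdot>\<^sub>v v) = (K * K) *\<^sub>v v"
    using K v Kv by (simp add: mult_mat_vec)
  also have "\<dots> = a \<cdot>\<^sub>v (J *\<^sub>v v) - b \<cdot>\<^sub>v (e \<cdot>\<^sub>v v)"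
    using K J v Kv unfolding K_def J_def a_def b_def multipartite_mat_square
    by (simp add: minus_mult_distrib_mat_vec[of _ m m] smult_mult_mat_vec[of _ m m])
  finally have square: "e \<cdot>\<^sub>v (e \<cdot>\<^sub>v v) = a \<cdot>\<^sub>v (J *\<^sub>v v) - b \<cdot>\<^sub>v (e \<cdot>\<^sub>v v)" .
  have aJv: "a \<cdot>\<^sub>v (J *\<^sub>v v) = f \<cdot>\<^sub>v v"
  proof (rule eq_vecI)
    fix j
    assume "j < dim_vec (f \<cdot>\<^sub>v v)"
    with v have j: "j < m"
      by simp
    from arg_cong[OF square, of "\<lambda>x. x $ j"] show "(a \<cdot>\<^sub>v (J *\<^sub>v v)) $ j = (f \<cdot>\<^sub>v v) $ j"
      using j v J by (simp add: f_def algebra_simps)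
  qed (use v J in simp)
  have "K *\<^sub>v (J *\<^sub>v v) = (K * J) *\<^sub>v v"
    using K J v by simp
  also have "\<dots> = a \<cdot>\<^sub>v (J *\<^sub>v v)"
    using v unfolding K_def J_def a_def multipartite_mat_mult_ones
    by (simp add: smult_mult_mat_vec[of _ m m])
  finally have KJv: "K *\<^sub>v (J *\<^sub>v v) = a \<cdot>\<^sub>v (J *\<^sub>v v)" .
  have "f \<cdot>\<^sub>v (e \<cdot>\<^sub>v v) = K *\<^sub>v (f \<cdot>\<^sub>v v)"
    using K v Kv by (simp add: mult_mat_vec)
  also have "\<dots> = K *\<^sub>v (a \<cdot>\<^sub>v (J *\<^sub>v v))"
    by (simp only: aJv)
  also have "\<dots> = a \<cdot>\<^sub>v (a \<cdot>\<^sub>v (J *\<^sub>v v))"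
    using K J v KJv by (simp add: mult_mat_vec)
  finally have "f \<cdot>\<^sub>v (e \<cdot>\<^sub>v v) = a \<cdot>\<^sub>v (f \<cdot>\<^sub>v v)"
    by (simp only: aJv)
  from arg_cong[OF this, of "\<lambda>x. x $ i"] show ?thesis
    using i v by (simp add: a_def b_def f_def algebra_simps)
qed

lemma multipartite_eigenvalue_cases:
  fixes e :: "'a::field"
  assumes "eigenvector (multipartite_mat m c) v e"
  shows "e = 0 \<or> e = - of_nat n \<or> e = of_nat (p * n)"
proof -
  from assms have v: "v \<in> carrier_vec m" "v \<noteq> 0\<^sub>v m"
    unfolding eigenvector_def by auto
  obtain i where i: "i < m" and vi: "v $ i \<noteq> 0"
  proof -
    have "v = 0\<^sub>v m" if "\<forall>i < m. v $ i = 0"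
      using v that by (intro eq_vecI) auto
    then show ?thesis
      using that v by blast
  qed
  with multipartite_eigenvector_component[OF assms i] have "e * (e + of_nat n) * (e - of_nat (p * n)) = 0"
    by simp
  then show ?thesis
    by (auto simp: add_eq_0_iff)
qed

lemma mat_trace_multipartite_mat:
  "mat_trace (multipartite_mat m c :: 'a::comm_ring_1 mat) = 0"
  "mat_trace (multipartite_mat m c * multipartite_mat m c :: 'a::comm_ring_1 mat) = of_nat (m * (p * n))"
  by (simp_all only: multipartite_mat_square) (simp_all add: mat_trace_def multipartite_mat_def ones_mat_def)

lemma eigenvalue_multiplicities:
  assumes "w * (p * n) = y * n" and "y * n * n + w * (p * n) * (p * n) = m * (p * n)"
  shows "w = 1" and "y = p"
proof -
  from assms(1) n_pos have y: "y = w * p"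
    by (simp add: mult.assoc[symmetric])
  with assms(2) have "w * (p * n * n * (p + 1)) = 1 * (p * n * n * (p + 1))"
    using card_vertices by (simp add: algebra_simps)
  then show "w = 1"
    using n_pos p_pos by (simp only: mult_cancel_right) simp
  with y show "y = p"
    by simp
qed

lemma eigenvalues_multipartite_mat:
  fixes es :: "complex list"
  assumes cp: "char_poly (multipartite_mat m c) = (\<Prod>a\<leftarrow>es. [:-a, 1:])"
  shows "mset es = replicate_mset (count (mset es) 0) 0
    + replicate_mset (count (mset es) (- of_nat n)) (- of_nat n)
    + replicate_mset (count (mset es) (of_nat (p * n))) (of_nat (p * n))"
proof (rule mset_eq_replicate_counts)
  show "set_mset (mset es) \<subseteq> {0, - of_nat n, of_nat (p * n)}"
  proof
    fix e
    assume "e \<in># mset es"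
    then have "poly (char_poly (multipartite_mat m c)) e = 0"
      by (simp add: cp poly_prod_list_zero_iff)
    then have "eigenvalue (multipartite_mat m c) e"
      by (simp add: eigenvalue_root_char_poly[OF multipartite_mat_carrier(1)])
    then obtain v where "eigenvector (multipartite_mat m c) v e"
      unfolding eigenvalue_def by blast
    then show "e \<in> {0, - of_nat n, of_nat (p * n)}"
      using multipartite_eigenvalue_cases by blast
  qed
  show "- of_nat n \<noteq> (of_nat (p * n) :: complex)"
  proof
    assume "- of_nat n = (of_nat (p * n) :: complex)"
    then have "of_nat (n + p * n) = (0 :: complex)"
      by (simp add: add_eq_0_iff)
    with n_pos show False
      by (simp only: of_nat_eq_0_iff)
  qed
qed (use n_pos p_pos in simp_all)

text \<open>The multiplicities of the eigenvalues \<open>0, -n, p n\<close> are forced by \<open>tr K = 0\<close> and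
  \<open>tr K\<^sup>2 = m p n\<close>.\<close>

lemma char_poly_multipartite_mat:
  "char_poly (multipartite_mat m c :: real mat) = (\<Prod>a\<in>#replicate_mset ((p + 1) * (n - 1)) 0
     + replicate_mset p (- real n) + {# real n * real p #}. [:-a, 1:])"
proof -
  define K where "K = (multipartite_mat m c :: complex mat)"
  have K: "K \<in> carrier_mat m m"
    by (simp add: K_def)
  obtain es where cp: "char_poly K = (\<Prod>a\<leftarrow>es. [:-a, 1:])" and len: "length es = m"
    using char_poly_factorized[OF K] by blast
  define x y w where "x = count (mset es) 0" and "y = count (mset es) (- of_nat n)"
    and "w = count (mset es) (of_nat (p * n))"
  have es: "mset es = replicate_mset x 0 + replicate_mset y (- of_nat n) + replicate_mset w (of_nat (p * n))"
    using eigenvalues_multipartite_mat cp unfolding K_def x_def y_def w_def by blast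
  have "of_nat y * (- of_nat n) + of_nat w * of_nat (p * n) = sum_mset (mset es)"
    unfolding es by simp
  also have "\<dots> = (0 :: complex)"
    using mat_trace_eq_sum_eigenvalues(1)[OF K cp] mat_trace_multipartite_mat(1)[where 'a = complex]
    by (simp add: K_def sum_mset_sum_list)
  finally have "of_nat (w * (p * n)) = (of_nat (y * n) :: complex)"
    by (simp add: algebra_simps)
  then have trace: "w * (p * n) = y * n"
    by (simp only: of_nat_eq_iff)
  have "of_nat y * (- of_nat n)\<^sup>2 + of_nat w * (of_nat (p * n))\<^sup>2 = sum_mset (image_mset (\<lambda>e. e\<^sup>2) (mset es))"
    unfolding es by simp
  also have "\<dots> = (of_nat (m * (p * n)) :: complex)"
    using mat_trace_eq_sum_eigenvalues(2)[OF K cp] mat_trace_multipartite_mat(2)[where 'a = complex]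
    by (simp add: K_def sum_mset_sum_list flip: mset_map)
  finally have "of_nat (y * n * n + w * (p * n) * (p * n)) = (of_nat (m * (p * n)) :: complex)"
    by (simp add: algebra_simps power2_eq_square)
  then have trace_square: "y * n * n + w * (p * n) * (p * n) = m * (p * n)"
    by (simp only: of_nat_eq_iff)
  have "x + y + w = m"
    using len es by (metis size_mset size_replicate_mset size_union)
  then have "x = (p + 1) * (n - 1)"
    using eigenvalue_multiplicities[OF trace trace_square] card_vertices n_pos
    by (simp add: algebra_simps diff_mult_distrib2)
  then have "mset es = image_mset complex_of_real (replicate_mset ((p + 1) * (n - 1)) 0
      + replicate_mset p (- real n) + {# real n * real p #})"
    using es eigenvalue_multiplicities[OF trace trace_square] by simp
  moreover have "map_mat complex_of_real (multipartite_mat m c) = K"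
    unfolding K_def by (rule eq_matI) (auto simp: multipartite_mat_def)
  ultimately show ?thesis
    using cp by (intro char_poly_of_complex_char_poly[of _ m]) auto
qed

lemma spec_multipartite_mat:
  "spec (multipartite_mat m c) = replicate_mset ((p + 1) * (n - 1)) 0 + replicate_mset p (- real n)
     + {# real n * real p #}"
  by (rule spec_eqI[OF char_poly_multipartite_mat])

lemma spec_multipartite_laplacian:
  "spec (real (p * n) \<cdot>\<^sub>m 1\<^sub>m m - multipartite_mat m c) = {# 0 #}
     + replicate_mset ((p + 1) * (n - 1)) (real n * real p) + replicate_mset p ((real p + 1) * real n)"
proof -
  have "real (p * n) \<cdot>\<^sub>m 1\<^sub>m m - multipartite_mat m c = real (p * n) \<cdot>\<^sub>m 1\<^sub>m m + (-1) \<cdot>\<^sub>m multipartite_mat m c"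
    by (rule eq_matI) auto
  then show ?thesis
    by (simp add: spec_affine[OF multipartite_mat_carrier(1) char_poly_multipartite_mat] algebra_simps)
qed

lemma spec_multipartite_signless_laplacian:
  "spec (real (p * n) \<cdot>\<^sub>m 1\<^sub>m m + multipartite_mat m c) = replicate_mset ((p + 1) * (n - 1)) (real n * real p)
     + replicate_mset p (real n * (real p - 1)) + {# 2 * real n * real p #}"
proof -
  have "real (p * n) \<cdot>\<^sub>m 1\<^sub>m m + multipartite_mat m c = real (p * n) \<cdot>\<^sub>m 1\<^sub>m m + 1 \<cdot>\<^sub>m multipartite_mat m c"
    by (rule eq_matI) auto
  then show ?thesis
    by (simp add: spec_affine[OF multipartite_mat_carrier(1) char_poly_multipartite_mat] algebra_simps)
qed

lemma nccc_matrices_multipartite: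
  assumes A: "nccc_adj_mat G = multipartite_mat m c"
  shows "nccc_lap_mat G = real (p * n) \<cdot>\<^sub>m 1\<^sub>m m - multipartite_mat m c"
    and "nccc_slap_mat G = real (p * n) \<cdot>\<^sub>m 1\<^sub>m m + multipartite_mat m c"
    and "card (nccc_vertices G) = m \<Longrightarrow> nccc_avg_deg G = real n * real p"
proof -
  have "nccc_deg_mat G = real (p * n) \<cdot>\<^sub>m 1\<^sub>m m"
    unfolding nccc_deg_mat_def Let_def A by (rule eq_matI) (simp_all add: multipartite_mat_row_sum)
  then show "nccc_lap_mat G = real (p * n) \<cdot>\<^sub>m 1\<^sub>m m - multipartite_mat m c"
    and "nccc_slap_mat G = real (p * n) \<cdot>\<^sub>m 1\<^sub>m m + multipartite_mat m c"
    unfolding nccc_lap_mat_def nccc_slap_mat_def A by simp_all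
  assume "card (nccc_vertices G) = m"
  moreover have "0 < m"
    using card_vertices n_pos by simp
  ultimately show "nccc_avg_deg G = real n * real p"
    unfolding nccc_avg_deg_def Let_def A by (simp add: multipartite_mat_row_sum)
qed

end

section \<open>Groups whose central quotient has order \<open>p\<^sup>2\<close>\<close>

lemma comm_group_DirProd:
  assumes "comm_group G" "comm_group H"
  shows "comm_group (G \<times>\<times> H)"
proof (rule group.group_comm_groupI)
  interpret G: comm_group G by fact
  interpret H: comm_group H by fact
  show "group (G \<times>\<times> H)"
    by (intro DirProd_group G.is_group H.is_group)
  fix x y
  assume "x \<in> carrier (G \<times>\<times> H)" "y \<in> carrier (G \<times>\<times> H)"
  then show "x \<otimes>\<^bsub>G \<times>\<times> H\<^esub> y = y \<otimes>\<^bsub>G \<times>\<times> H\<^esub> x"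
    using comm_groupE(4)[OF assms(1)] comm_groupE(4)[OF assms(2)] by (auto simp: mult_DirProd')
qed

definition centralizer :: "('a, 'b) monoid_scheme \<Rightarrow> 'a set \<Rightarrow> 'a set" where
  "centralizer G S = {g \<in> carrier G. \<forall>s \<in> S. s \<otimes>\<^bsub>G\<^esub> g = g \<otimes>\<^bsub>G\<^esub> s}"

lemma grp_center_eq_centralizer: "grp_center G = centralizer G (carrier G)"
  unfolding grp_center_def centralizer_def by auto

lemma centralizer_subset_carrier: "centralizer G S \<subseteq> carrier G"
  by (auto simp: centralizer_def)

lemma center_subset_centralizer: "x \<in> carrier G \<Longrightarrow> grp_center G \<subseteq> centralizer G {x}"
  by (auto simp: grp_center_def centralizer_def)

lemma nccc_vlist_distinct_set:
  assumes "finite (nccc_vertices G)"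
  shows "distinct (nccc_vlist G)" and "set (nccc_vlist G) = nccc_vertices G"
proof -
  have "\<exists>vs. distinct vs \<and> set vs = nccc_vertices G"
    using finite_distinct_list[OF assms] by blast
  from someI_ex[OF this] show "distinct (nccc_vlist G)" and "set (nccc_vlist G) = nccc_vertices G"
    unfolding nccc_vlist_def by auto
qed

lemma card_indices_distinct:
  assumes "distinct xs"
  shows "card {k \<in> {0..<length xs}. P (xs ! k)} = card {x \<in> set xs. P x}"
  using length_filter_conv_card[of P xs] distinct_length_filter[OF assms, of P]
  by (simp add: Int_def conj_commute)

context group
begin

lemma centralizer_subgroup:
  assumes "S \<subseteq> carrier G"
  shows "subgroup (centralizer G S) G"
proof (rule subgroupI)
  show "centralizer G S \<subseteq> carrier G"
    by (auto simp: centralizer_def)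
  have "\<one> \<in> centralizer G S"
    using assms by (auto simp: centralizer_def)
  then show "centralizer G S \<noteq> {}"
    by blast
  fix a b
  assume a: "a \<in> centralizer G S" and b: "b \<in> centralizer G S"
  then have a_carrier: "a \<in> carrier G" and b_carrier: "b \<in> carrier G"
    by (auto simp: centralizer_def)
  have "s \<otimes> inv a = inv a \<otimes> s" if "s \<in> S" for s
  proof -
    have s: "s \<in> carrier G" and "s \<otimes> a = a \<otimes> s"
      using that assms a by (auto simp: centralizer_def)
    then have "s \<otimes> inv a = inv a \<otimes> (s \<otimes> a) \<otimes> inv a"
      using a_carrier by (simp add: m_assoc[symmetric])
    also have "\<dots> = inv a \<otimes> s"
      using s a_carrier by (simp add: m_assoc)
    finally show ?thesis .
  qed
  then show "inv a \<in> centralizer G S"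
    using a_carrier by (simp add: centralizer_def)
  have "s \<otimes> (a \<otimes> b) = a \<otimes> b \<otimes> s" if "s \<in> S" for s
  proof -
    have s: "s \<in> carrier G" and "s \<otimes> a = a \<otimes> s" "s \<otimes> b = b \<otimes> s"
      using that assms a b by (auto simp: centralizer_def)
    then show ?thesis
      using a_carrier b_carrier by (metis m_assoc)
  qed
  then show "a \<otimes> b \<in> centralizer G S"
    using a_carrier b_carrier by (simp add: centralizer_def)
qed

lemma grp_center_subgroup: "subgroup (grp_center G) G"
  unfolding grp_center_eq_centralizer by (rule centralizer_subgroup) simp

lemma grp_center_normal: "grp_center G \<lhd> G"
  unfolding normal_inv_iff
proof (intro conjI ballI grp_center_subgroup)
  fix x h
  assume x: "x \<in> carrier G" and h: "h \<in> grp_center G"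
  then have "x \<otimes> h = h \<otimes> x" and "h \<in> carrier G"
    by (auto simp: grp_center_def)
  then have "x \<otimes> h \<otimes> inv x = h"
    using x by (simp add: m_assoc)
  with h show "x \<otimes> h \<otimes> inv x \<in> grp_center G"
    by simp
qed

lemma card_subgroup_dvd:
  assumes "subgroup H G" "subgroup K G" "H \<subseteq> K"
  shows "card H dvd card K"
proof -
  interpret K: group "G\<lparr>carrier := K\<rparr>"
    by (rule subgroup.subgroup_is_group[OF assms(2) is_group])
  have "card (rcosets\<^bsub>G\<lparr>carrier := K\<rparr>\<^esub> H) * card H = card K"
    using K.lagrange[OF subgroup_incl[OF assms]] by (simp add: Coset.order_def)
  then show ?thesis
    by (metis dvd_triv_right)
qed

lemma conj_mem_coset_of_comm_FactGroup:
  assumes "N \<lhd> G" "comm_group (G Mod N)" "g \<in> carrier G" "x \<in> carrier G"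
  shows "\<exists>c \<in> N. g \<otimes> x \<otimes> inv g = c \<otimes> x"
proof
  show "g \<otimes> x \<otimes> inv g \<otimes> inv x \<in> N"
    using derived_minimal[OF assms(1,2)] assms(3,4) unfolding derived_def
    by (blast intro: generate.incl)
  show "g \<otimes> x \<otimes> inv g = g \<otimes> x \<otimes> inv g \<otimes> inv x \<otimes> x"
    using assms(3,4) by (simp add: m_assoc)
qed

lemma conj_class_eq_orbit:
  assumes "x \<in> carrier G"
  shows "conj_class G x = orbit G (\<lambda>g. \<lambda>h \<in> carrier G. g \<otimes> h \<otimes> inv g) x"
  using assms unfolding conj_class_def orbit_def by auto

lemma self_mem_conj_class: "x \<in> carrier G \<Longrightarrow> x \<in> conj_class G x"
  using group_action.orbit_refl[OF action_by_conjugation] by (simp add: conj_class_eq_orbit)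

lemma conj_class_subset_carrier: "x \<in> carrier G \<Longrightarrow> conj_class G x \<subseteq> carrier G"
  by (auto simp: conj_class_def)

lemma conj_class_eq:
  assumes x: "x \<in> carrier G" and y: "y \<in> conj_class G x"
  shows "conj_class G y = conj_class G x"
proof -
  interpret conj: group_action G "carrier G" "\<lambda>g. \<lambda>h \<in> carrier G. g \<otimes> h \<otimes> inv g"
    by (rule action_by_conjugation)
  have y_carrier: "y \<in> carrier G"
    using conj_class_subset_carrier[OF x] y by blast
  have "x \<in> conj_class G y"
    using conj.orbit_sym[OF x y_carrier] y by (simp add: conj_class_eq_orbit x y_carrier)
  have trans: "z \<in> conj_class G u"
    if "u \<in> carrier G" "v \<in> carrier G" "v \<in> conj_class G u" "z \<in> conj_class G v" for u v z
  proof -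
    have "z \<in> carrier G"
      using that conj_class_subset_carrier by blast
    then show ?thesis
      using conj.orbit_trans[of u v z] that by (simp add: conj_class_eq_orbit)
  qed
  show ?thesis
    using trans[OF x y_carrier y] trans[OF y_carrier x \<open>x \<in> conj_class G y\<close>] by blast
qed

lemma conj_classes_disjoint:
  assumes "x \<in> carrier G" "y \<in> carrier G" "conj_class G x \<noteq> conj_class G y"
  shows "conj_class G x \<inter> conj_class G y = {}"
  using assms conj_class_eq by blast

lemma card_conj_class_mult_card_centralizer:
  assumes "x \<in> carrier G"
  shows "card (conj_class G x) * card (centralizer G {x}) = Coset.order G"
proof -
  interpret conj: group_action G "carrier G" "\<lambda>g. \<lambda>h \<in> carrier G. g \<otimes> h \<otimes> inv g"
    by (rule action_by_conjugation)
  have "stabilizer G (\<lambda>g. \<lambda>h \<in> carrier G. g \<otimes> h \<otimes> inv g) x = centralizer G {x}"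
    unfolding stabilizer_def centralizer_def
  proof (intro Collect_cong conj_cong refl)
    fix g
    assume g: "g \<in> carrier G"
    show "((\<lambda>h \<in> carrier G. g \<otimes> h \<otimes> inv g) x = x) = (\<forall>s \<in> {x}. s \<otimes> g = g \<otimes> s)"
      using inv_solve_right'[of x "g \<otimes> x" g] g assms by (simp add: eq_commute[of "x \<otimes> g"])
  qed
  then show ?thesis
    using conj.orbit_stabilizer_theorem[OF assms] by (simp add: conj_class_eq_orbit[OF assms])
qed

lemma conj_class_noncentral:
  assumes "x \<in> carrier G - grp_center G" "y \<in> conj_class G x"
  shows "y \<in> carrier G - grp_center G"
proof -
  obtain g where g: "g \<in> carrier G" and y: "y = g \<otimes> x \<otimes> inv g"
    using assms(2) unfolding conj_class_def by blast
  have "y \<notin> grp_center G"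
  proof
    assume "y \<in> grp_center G"
    then have "y \<otimes> g = g \<otimes> y" and y_carrier: "y \<in> carrier G"
      using g by (auto simp: grp_center_def)
    then have "inv g \<otimes> y \<otimes> g = inv g \<otimes> (g \<otimes> y)"
      using g by (simp add: m_assoc)
    also have "\<dots> = y"
      using g y_carrier by (simp add: m_assoc[symmetric])
    finally have "inv g \<otimes> y \<otimes> g = y" .
    moreover have "inv g \<otimes> y \<otimes> g = x"
      using g assms(1) y by (simp add: m_assoc) (simp add: m_assoc[symmetric])
    ultimately show False
      using \<open>y \<in> grp_center G\<close> assms(1) by simp
  qed
  then show ?thesis
    using conj_class_subset_carrier assms by blast
qed

end

locale central_quotient_p_sq = group G for G :: "('a, 'b) monoid_scheme" (structure) +
  fixes p :: nat
  assumes finite_carrier: "finite (carrier G)"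
    and prime_p: "Factorial_Ring.prime p"
    and card_carrier: "card (carrier G) = p\<^sup>2 * card (grp_center G)"
    and comm_quotient: "comm_group (G Mod grp_center G)"
begin

lemma p_ge_2: "2 \<le> p"
  using prime_p prime_ge_2_nat by blast

lemma card_center_pos: "0 < card (grp_center G)"
proof -
  have "0 < card (carrier G)"
    using finite_carrier one_closed card_gt_0_iff by blast
  then show ?thesis
    using card_carrier by simp
qed

lemma exists_noncentral: "\<exists>x. x \<in> carrier G - grp_center G"
proof -
  have "1 < p\<^sup>2"
    using p_ge_2 by (intro one_less_power) auto
  then have "1 * card (grp_center G) < card (carrier G)"
    using card_carrier card_center_pos by (simp only: mult_less_mono1)
  have "\<not> carrier G \<subseteq> grp_center G"
  proof
    assume "carrier G \<subseteq> grp_center G"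
    then have "card (carrier G) \<le> card (grp_center G)"
      using finite_subset[OF _ finite_carrier] by (intro card_mono) (auto simp: grp_center_def)
    with \<open>1 * card (grp_center G) < card (carrier G)\<close> show False
      by simp
  qed
  then show ?thesis
    by blast
qed

lemma finite_centralizer: "finite (centralizer G S)"
  using finite_carrier centralizer_subset_carrier[of G] by (rule finite_subset[rotated])

lemma card_centralizer_noncentral:
  assumes x: "x \<in> carrier G - grp_center G"
  shows "card (centralizer G {x}) = p * card (grp_center G)"
proof -
  let ?Z = "grp_center G" and ?C = "centralizer G {x}"
  have x_carrier: "x \<in> carrier G"
    using x by simp
  have C: "subgroup ?C G"
    using x by (intro centralizer_subgroup) auto
  obtain d where d: "card ?C = card ?Z * d"
    using card_subgroup_dvd[OF grp_center_subgroup C center_subset_centralizer[OF x_carrier]] by (elim dvdE)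
  have "card ?Z * d dvd card ?Z * p\<^sup>2"
    using card_subgroup_dvd[OF C subgroup_self centralizer_subset_carrier[of G]] d card_carrier
    by (simp add: mult.commute)
  then obtain i where "i \<le> 2" and di: "d = p ^ i"
    using card_center_pos divides_primepow_nat[OF prime_p] by auto
  have "x \<in> ?C"
    using x by (simp add: centralizer_def)
  then have "card ?Z < card ?C"
    using x finite_centralizer center_subset_centralizer[of x G] by (intro psubset_card_mono) auto
  then have "i \<noteq> 0"
    using d di by (intro notI) simp
  have "?C \<noteq> carrier G"
  proof
    assume "?C = carrier G"
    then have "x \<in> grp_center G"
      using x unfolding centralizer_def grp_center_def by auto
    with x show False
      by simp
  qed
  then have "card ?C < card (carrier G)"
    using finite_carrier centralizer_subset_carrier[of G] by (intro psubset_card_mono) auto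
  then have "i \<noteq> 2"
    using d di card_carrier by (auto simp: mult.commute)
  with \<open>i \<le> 2\<close> \<open>i \<noteq> 0\<close> have "i = 1"
    by linarith
  then show ?thesis
    using d di by simp
qed

lemma subgroup_between_center_centralizer:
  assumes x: "x \<in> carrier G - grp_center G"
    and H: "subgroup H G" "grp_center G \<subset> H" "H \<subseteq> centralizer G {x}"
  shows "H = centralizer G {x}"
proof -
  let ?Z = "grp_center G" and ?C = "centralizer G {x}"
  have C: "subgroup ?C G"
    using x by (intro centralizer_subgroup) auto
  obtain e where e: "card H = card ?Z * e"
    using card_subgroup_dvd[OF grp_center_subgroup H(1)] H(2) by (auto elim: dvdE)
  have "card ?Z * e dvd card ?Z * p"
    using card_subgroup_dvd[OF H(1) C H(3)] e card_centralizer_noncentral[OF x] by (simp add: mult.commute)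
  then have "e = 1 \<or> e = p"
    using card_center_pos prime_p by (simp add: prime_nat_iff)
  moreover have "card ?Z < card H"
    using H(2) finite_subset[OF H(3) finite_centralizer] by (intro psubset_card_mono)
  ultimately have "card H = card ?C"
    using e card_centralizer_noncentral[OF x] by auto
  then show ?thesis
    using H(3) finite_centralizer by (intro card_subset_eq) auto
qed

lemma centralizer_eq_of_commute:
  assumes x: "x \<in> carrier G - grp_center G" and y: "y \<in> carrier G - grp_center G"
    and xy: "x \<otimes> y = y \<otimes> x"
  shows "centralizer G {x} = centralizer G {y}"
proof -
  let ?K = "centralizer G {x} \<inter> centralizer G {y}"
  have K: "subgroup ?K G"
    using x y by (intro subgroups_Inter_pair centralizer_subgroup) auto
  have "x \<in> ?K"
    using x y xy by (auto simp: centralizer_def)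
  then have ZK: "grp_center G \<subset> ?K"
    using x y center_subset_centralizer[of x G] center_subset_centralizer[of y G] by blast
  have "?K = centralizer G {x}"
    by (rule subgroup_between_center_centralizer[OF x K ZK]) simp
  moreover have "?K = centralizer G {y}"
    by (rule subgroup_between_center_centralizer[OF y K ZK]) simp
  ultimately show ?thesis
    by simp
qed

lemma centralizer_central_mult:
  assumes c: "c \<in> grp_center G" and x: "x \<in> carrier G"
  shows "centralizer G {c \<otimes> x} = centralizer G {x}"
proof -
  have c_carrier: "c \<in> carrier G"
    using c by (simp add: grp_center_def)
  have "c \<otimes> x \<otimes> g = g \<otimes> (c \<otimes> x) \<longleftrightarrow> x \<otimes> g = g \<otimes> x" if g: "g \<in> carrier G" for g
  proof -
    have "g \<otimes> c = c \<otimes> g"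
      using c g by (simp add: grp_center_def)
    then have "g \<otimes> (c \<otimes> x) = c \<otimes> (g \<otimes> x)"
      using g x c_carrier by (simp add: m_assoc[symmetric])
    then show ?thesis
      using g x c_carrier by (simp add: m_assoc)
  qed
  then show ?thesis
    unfolding centralizer_def by auto
qed

lemma centralizer_conj_class_mem:
  assumes x: "x \<in> carrier G" and y: "y \<in> conj_class G x"
  shows "centralizer G {y} = centralizer G {x}"
proof -
  obtain g where "g \<in> carrier G" and "y = g \<otimes> x \<otimes> inv g"
    using y unfolding conj_class_def by blast
  then obtain c where "c \<in> grp_center G" and "y = c \<otimes> x"
    using conj_mem_coset_of_comm_FactGroup[OF grp_center_normal comm_quotient _ x] by metis
  then show ?thesis
    using centralizer_central_mult x by simp
qed

lemma centralizer_conj_class: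
  assumes x: "x \<in> carrier G"
  shows "centralizer G (conj_class G x) = centralizer G {x}"
proof
  show "centralizer G (conj_class G x) \<subseteq> centralizer G {x}"
    using self_mem_conj_class[OF x] by (auto simp: centralizer_def)
  show "centralizer G {x} \<subseteq> centralizer G (conj_class G x)"
  proof
    fix g
    assume g: "g \<in> centralizer G {x}"
    have "y \<otimes> g = g \<otimes> y" if "y \<in> conj_class G x" for y
    proof -
      have "g \<in> centralizer G {y}"
        using g centralizer_conj_class_mem[OF x that] by simp
      then show ?thesis
        by (simp add: centralizer_def)
    qed
    with g show "g \<in> centralizer G (conj_class G x)"
      by (simp add: centralizer_def)
  qed
qed

lemma card_conj_class_noncentral:
  assumes x: "x \<in> carrier G - grp_center G"
  shows "card (conj_class G x) = p"
proof -
  have "card (conj_class G x) * (p * card (grp_center G)) = p * (p * card (grp_center G))"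
    using card_conj_class_mult_card_centralizer[of x] card_centralizer_noncentral[OF x] x card_carrier
    by (simp add: Coset.order_def power2_eq_square mult.assoc)
  then show ?thesis
    using p_ge_2 card_center_pos by simp
qed

lemma nccc_adj_iff_centralizer_ne:
  assumes V: "V \<in> nccc_vertices G" and W: "W \<in> nccc_vertices G"
  shows "nccc_adj G V W \<longleftrightarrow> centralizer G V \<noteq> centralizer G W"
proof -
  obtain x where x: "x \<in> carrier G - grp_center G" and Vx: "V = conj_class G x"
    using V unfolding nccc_vertices_def by blast
  obtain y where y: "y \<in> carrier G - grp_center G" and Wy: "W = conj_class G y"
    using W unfolding nccc_vertices_def by blast
  have CV: "centralizer G V = centralizer G {x}" and CW: "centralizer G W = centralizer G {y}"
    using x y centralizer_conj_class by (simp_all add: Vx Wy)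
  show ?thesis
  proof
    assume adj: "nccc_adj G V W"
    show "centralizer G V \<noteq> centralizer G W"
    proof
      assume "centralizer G V = centralizer G W"
      then have "y \<in> centralizer G {x}"
        using y CV CW by (simp add: centralizer_def)
      then have "x \<otimes> y = y \<otimes> x"
        by (simp add: centralizer_def)
      then show False
        using adj x y self_mem_conj_class unfolding nccc_adj_def Vx Wy by blast
    qed
  next
    assume ne: "centralizer G V \<noteq> centralizer G W"
    have "x' \<otimes> y' \<noteq> y' \<otimes> x'" if x': "x' \<in> V" and y': "y' \<in> W" for x' y'
    proof
      assume "x' \<otimes> y' = y' \<otimes> x'"
      moreover have "x' \<in> carrier G - grp_center G" and "y' \<in> carrier G - grp_center G"
        using conj_class_noncentral x y x' y' Vx Wy by blast+
      ultimately have "centralizer G {x'} = centralizer G {y'}"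
        by (rule centralizer_eq_of_commute[rotated 2])
      moreover have "centralizer G {x'} = centralizer G V" and "centralizer G {y'} = centralizer G W"
        using centralizer_conj_class_mem x y x' y' CV CW unfolding Vx Wy by simp_all
      ultimately show False
        using ne by simp
    qed
    with ne show "nccc_adj G V W"
      unfolding nccc_adj_def by blast
  qed
qed

lemma card_conj_classes:
  assumes "S \<subseteq> carrier G - grp_center G" and "\<And>x. x \<in> S \<Longrightarrow> conj_class G x \<subseteq> S"
  shows "p * card (conj_class G ` S) = card S"
proof -
  have finite: "finite S"
    using assms(1) finite_carrier by (blast intro: finite_subset)
  have "\<Union> (conj_class G ` S) = S"
  proof (intro equalityI subsetI)
    fix y
    assume "y \<in> S"
    then show "y \<in> \<Union> (conj_class G ` S)"
      using assms(1) self_mem_conj_class by blast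
  qed (use assms(2) in blast)
  moreover have "p * card (conj_class G ` S) = card (\<Union> (conj_class G ` S))"
  proof (rule card_partition)
    show "card C = p" if "C \<in> conj_class G ` S" for C
      using that assms(1) card_conj_class_noncentral by blast
    show "C1 \<inter> C2 = {}" if "C1 \<in> conj_class G ` S" "C2 \<in> conj_class G ` S" "C1 \<noteq> C2" for C1 C2
      using that assms(1) conj_classes_disjoint by blast
  qed (use finite \<open>\<Union> (conj_class G ` S) = S\<close> in simp_all)
  ultimately show ?thesis
    by simp
qed

lemma card_nccc_vertices: "p * card (nccc_vertices G) = card (carrier G) - card (grp_center G)"
proof -
  have "p * card (nccc_vertices G) = card (carrier G - grp_center G)"
    unfolding nccc_vertices_def
  proof (rule card_conj_classes)
    show "conj_class G x \<subseteq> carrier G - grp_center G" if "x \<in> carrier G - grp_center G" for x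
      using conj_class_noncentral[OF that] by blast
  qed simp
  also have "\<dots> = card (carrier G) - card (grp_center G)"
  proof (rule card_Diff_subset)
    show "grp_center G \<subseteq> carrier G"
      by (auto simp: grp_center_def)
    then show "finite (grp_center G)"
      using finite_carrier by (rule finite_subset)
  qed
  finally show ?thesis .
qed

lemma centralizer_mem_noncentral:
  assumes x: "x \<in> carrier G - grp_center G" and y: "y \<in> centralizer G {x} - grp_center G"
  shows "y \<in> carrier G - grp_center G" and "centralizer G {y} = centralizer G {x}"
proof -
  show y_noncentral: "y \<in> carrier G - grp_center G"
    using y centralizer_subset_carrier[of G] by blast
  have "x \<otimes> y = y \<otimes> x"
    using y by (simp add: centralizer_def)
  then show "centralizer G {y} = centralizer G {x}"
    using centralizer_eq_of_commute[OF x y_noncentral] by simp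
qed

lemma nccc_vertices_with_centralizer:
  assumes x: "x \<in> carrier G - grp_center G"
  shows "{V \<in> nccc_vertices G. centralizer G V = centralizer G {x}}
    = conj_class G ` (centralizer G {x} - grp_center G)"
proof (intro equalityI subsetI)
  fix V
  assume "V \<in> {V \<in> nccc_vertices G. centralizer G V = centralizer G {x}}"
  then obtain y where y: "y \<in> carrier G - grp_center G" and V: "V = conj_class G y"
    and "centralizer G {y} = centralizer G {x}"
    unfolding nccc_vertices_def using centralizer_conj_class by auto
  then have "y \<in> centralizer G {x}"
    by (auto simp: centralizer_def)
  with y V show "V \<in> conj_class G ` (centralizer G {x} - grp_center G)"
    by blast
next
  fix V
  assume "V \<in> conj_class G ` (centralizer G {x} - grp_center G)"
  then obtain y where y: "y \<in> centralizer G {x} - grp_center G" and V: "V = conj_class G y"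
    by blast
  have "V \<in> nccc_vertices G"
    using centralizer_mem_noncentral(1)[OF x y] V unfolding nccc_vertices_def by blast
  moreover have "centralizer G V = centralizer G {x}"
    using centralizer_conj_class centralizer_mem_noncentral[OF x y] V by simp
  ultimately show "V \<in> {V \<in> nccc_vertices G. centralizer G V = centralizer G {x}}"
    by blast
qed

lemma card_centralizer_diff_center:
  assumes x: "x \<in> carrier G - grp_center G"
  shows "card (centralizer G {x} - grp_center G) = (p - 1) * card (grp_center G)"
proof -
  have "card (centralizer G {x} - grp_center G) = card (centralizer G {x}) - card (grp_center G)"
  proof (rule card_Diff_subset)
    show "grp_center G \<subseteq> centralizer G {x}"
      using x center_subset_centralizer[of x G] by simp
    then show "finite (grp_center G)"
      using finite_centralizer by (rule finite_subset)
  qed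
  then show ?thesis
    using card_centralizer_noncentral[OF x] by (simp add: diff_mult_distrib)
qed

lemma card_nccc_part:
  assumes x: "x \<in> carrier G - grp_center G"
  shows "p * card {V \<in> nccc_vertices G. centralizer G V = centralizer G {x}} = (p - 1) * card (grp_center G)"
  unfolding nccc_vertices_with_centralizer[OF x] card_centralizer_diff_center[OF x, symmetric]
proof (rule card_conj_classes)
  show "centralizer G {x} - grp_center G \<subseteq> carrier G - grp_center G"
    using centralizer_mem_noncentral(1)[OF x] by blast
  fix y
  assume y: "y \<in> centralizer G {x} - grp_center G"
  show "conj_class G y \<subseteq> centralizer G {x} - grp_center G"
  proof
    fix z
    assume z: "z \<in> conj_class G y"
    then have "z \<in> carrier G - grp_center G"
      using conj_class_noncentral centralizer_mem_noncentral(1)[OF x y] by blast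
    moreover have "z \<in> centralizer G {z}"
      using \<open>z \<in> carrier G - grp_center G\<close> by (simp add: centralizer_def)
    moreover have "centralizer G {z} = centralizer G {x}"
      using centralizer_conj_class_mem[OF _ z] centralizer_mem_noncentral[OF x y] by simp
    ultimately show "z \<in> centralizer G {x} - grp_center G"
      by simp
  qed
qed

lemma card_nccc_part_eq:
  assumes "x \<in> carrier G - grp_center G"
  shows "card {V \<in> nccc_vertices G. centralizer G V = centralizer G {x}} = (p - 1) * card (grp_center G) div p"
proof -
  have "p \<noteq> 0"
    using p_ge_2 by simp
  then show ?thesis
    using card_nccc_part[OF assms] by (metis nonzero_mult_div_cancel_left)
qed

lemma nccc_part_size_pos: "0 < (p - 1) * card (grp_center G) div p"
proof -
  obtain x where x: "x \<in> carrier G - grp_center G"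
    using exists_noncentral by blast
  have "0 < (p - 1) * card (grp_center G)"
    using p_ge_2 card_center_pos by simp
  then show ?thesis
    using card_nccc_part[OF x] card_nccc_part_eq[OF x] by (metis mult_0_right neq0_conv)
qed

lemma card_nccc_vertices_eq: "card (nccc_vertices G) = (p + 1) * ((p - 1) * card (grp_center G) div p)"
proof -
  define n where "n = (p - 1) * card (grp_center G) div p"
  obtain x where x: "x \<in> carrier G - grp_center G"
    using exists_noncentral by blast
  have pn: "p * n = (p - 1) * card (grp_center G)"
    using card_nccc_part[OF x] card_nccc_part_eq[OF x] by (simp add: n_def)
  obtain q where q: "p = q + 1"
    using p_ge_2 by (metis add.commute le_Suc_ex one_le_numeral le_trans)
  have "p * card (nccc_vertices G) = p\<^sup>2 * card (grp_center G) - card (grp_center G)"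
    using card_nccc_vertices card_carrier by simp
  also have "\<dots> = (p + 1) * ((p - 1) * card (grp_center G))"
    by (simp add: q power2_eq_square algebra_simps)
  also have "\<dots> = p * ((p + 1) * n)"
    by (metis pn mult.left_commute)
  finally show ?thesis
    using p_ge_2 by (simp add: n_def)
qed

lemma nccc_graph_complete_multipartite:
  assumes n: "n = (p - 1) * card (grp_center G) div p"
  obtains c :: "nat \<Rightarrow> 'a set" where "complete_multipartite ((p + 1) * n) n p c"
    and "nccc_adj_mat G = multipartite_mat ((p + 1) * n) c"
    and "card (nccc_vertices G) = (p + 1) * n"
proof -
  define vs c where "vs = nccc_vlist G" and "c = (\<lambda>i. centralizer G (vs ! i))"
  have "finite (nccc_vertices G)"
    unfolding nccc_vertices_def using finite_carrier by simp
  then have vs: "distinct vs" "set vs = nccc_vertices G"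
    using nccc_vlist_distinct_set unfolding vs_def by blast+
  have card_V: "card (nccc_vertices G) = (p + 1) * n"
    using card_nccc_vertices_eq n by simp
  then have len: "length vs = (p + 1) * n"
    using vs distinct_card by metis
  then have vs_nth: "vs ! i \<in> nccc_vertices G" if "i < (p + 1) * n" for i
    using that vs by (metis nth_mem)
  have "complete_multipartite ((p + 1) * n) n p c"
  proof unfold_locales
    show "0 < n"
      using nccc_part_size_pos n by simp
    show "0 < p"
      using p_ge_2 by simp
    fix i
    assume i: "i < (p + 1) * n"
    obtain x where x: "x \<in> carrier G - grp_center G" and "vs ! i = conj_class G x"
      using vs_nth[OF i] unfolding nccc_vertices_def by blast
    then have ci: "c i = centralizer G {x}"
      by (simp add: c_def centralizer_conj_class)
    have "card {k \<in> {0..<(p + 1) * n}. c k = c i}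
        = card {V \<in> nccc_vertices G. centralizer G V = centralizer G {x}}"
      unfolding ci using card_indices_distinct[OF vs(1)] by (simp add: c_def len vs(2))
    also have "\<dots> = n"
      using card_nccc_part_eq[OF x] n by simp
    finally show "card {k \<in> {0..<(p + 1) * n}. c k = c i} = n" .
  qed simp
  moreover have "nccc_adj_mat G = multipartite_mat ((p + 1) * n) c"
    unfolding nccc_adj_mat_def Let_def vs_def[symmetric] len multipartite_mat_def
    by (rule eq_matI) (simp_all add: c_def nccc_adj_iff_centralizer_ne vs_nth)
  ultimately show ?thesis
    using that card_V by blast
qed

end

lemma central_quotient_p_sq_of_iso:
  assumes "group G" "finite (carrier G)" "Factorial_Ring.prime p"
    and iso: "G Mod grp_center G \<cong> integer_mod_group p \<times>\<times> integer_mod_group p"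
  shows "central_quotient_p_sq G p"
proof -
  interpret group G by fact
  interpret Z: normal "grp_center G" G
    by (rule grp_center_normal)
  have "0 < p"
    using assms(3) prime_gt_0_nat by blast
  then have "card (rcosets\<^bsub>G\<^esub> grp_center G) = p * p"
    using iso_same_card[OF iso] by (simp add: FactGroup_def carrier_integer_mod_group card_cartesian_product)
  then have "card (carrier G) = p\<^sup>2 * card (grp_center G)"
    using lagrange[OF grp_center_subgroup] by (simp add: Coset.order_def power2_eq_square)
  moreover have "comm_group (integer_mod_group p \<times>\<times> integer_mod_group p)"
    by (intro comm_group_DirProd abelian_integer_mod_group)
  then have "comm_group (G Mod grp_center G)"
    using group.iso_sym[OF Z.factorgroup_is_group iso] Z.factorgroup_is_group
    by (auto intro: comm_group.iso_imp_comm_group group.is_monoid)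
  ultimately show ?thesis
    using assms unfolding central_quotient_p_sq_def central_quotient_p_sq_axioms_def by blast
qed

theorem theorem2p3:
  fixes G :: "('a, 'b) monoid_scheme" and p z n :: nat
  assumes "group G" and "finite (carrier G)"
    and "\<not> comm_group G"
    and "Factorial_Ring.prime p"
    and "G Mod (grp_center G) \<cong> (integer_mod_group p \<times>\<times> integer_mod_group p)"
    and "z = card (grp_center G)"
    and "n = (p - 1) * z div p"
  shows "spec (nccc_adj_mat G) =
           replicate_mset ((p + 1) * (n - 1)) 0 + replicate_mset p (- real n)
           + {# real n * real p #} \<and>
         spec (nccc_lap_mat G) =
           {# 0 #} + replicate_mset ((p + 1) * (n - 1)) (real n * real p)
           + replicate_mset p ((real p + 1) * real n) \<and>
         spec (nccc_slap_mat G) =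
           replicate_mset ((p + 1) * (n - 1)) (real n * real p)
           + replicate_mset p (real n * (real p - 1)) + {# 2 * real n * real p #} \<and>
         energy G = 2 * real n * real p \<and>
         lap_energy G = 2 * real n * real p \<and>
         slap_energy G = 2 * real n * real p"
proof -
  interpret central_quotient_p_sq G p
    using assms(1,2,4,5) by (rule central_quotient_p_sq_of_iso)
  have "n = (p - 1) * card (grp_center G) div p"
    using assms(6,7) by simp
  then obtain c :: "nat \<Rightarrow> 'a set" where "complete_multipartite ((p + 1) * n) n p c"
    and A: "nccc_adj_mat G = multipartite_mat ((p + 1) * n) c"
    and V: "card (nccc_vertices G) = (p + 1) * n"
    by (rule nccc_graph_complete_multipartite)
  then interpret complete_multipartite "(p + 1) * n" n p c
    by simp
  have spec_A: "spec (nccc_adj_mat G) = replicate_mset ((p + 1) * (n - 1)) 0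
      + replicate_mset p (- real n) + {# real n * real p #}"
    unfolding A by (rule spec_multipartite_mat)
  have spec_L: "spec (nccc_lap_mat G) = {# 0 #} + replicate_mset ((p + 1) * (n - 1)) (real n * real p)
      + replicate_mset p ((real p + 1) * real n)"
    unfolding nccc_matrices_multipartite(1)[OF A] by (rule spec_multipartite_laplacian)
  have spec_Q: "spec (nccc_slap_mat G) = replicate_mset ((p + 1) * (n - 1)) (real n * real p)
      + replicate_mset p (real n * (real p - 1)) + {# 2 * real n * real p #}"
    unfolding nccc_matrices_multipartite(2)[OF A] by (rule spec_multipartite_signless_laplacian)
  show ?thesis
    using nccc_matrices_multipartite(3)[OF A V]
    by (simp add: spec_A spec_L spec_Q energy_def lap_energy_def slap_energy_def algebra_simps)
qed

end
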